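(* Let $T$ be a reduced linear trellis of length $n$ over $\mathbb{F}$, let $\{\mathfrak{s}_i\}_{i\in\mathcal{I}}$ be a family of spans, and let $\mathfrak{s}$ be a span such that $\mathfrak{s}\not\le\mathfrak{s}_i$ for every $i\in\mathcal{I}$. Then $$\mathbb{S}_{\mathfrak{s}}(T)\cap\sum_{i\in\mathcal{I}}\mathbb{S}_{\mathfrak{s}_i}(T)\ \subseteq\ \mathbb{S}_{<\mathfrak{s}}(T).$$
   Context: Let $\mathbb{F}$ be a finite field with $q$ elements and $n\ge1$; indices are taken in $\mathbb{Z}_n$. A trellis $T$ of length $n$ over $\mathbb{F}$ consists of pairwise disjoint finite vertex sets $V_i(T)$, $i\in\mathbb{Z}_n$, and edge sets $E_i(T)\subseteq V_i(T)\times\mathbb{F}\times V_{i+1}(T)$; $(v,\alpha,w)\in E_i(T)$ is an edge from $v$ to $w$ with label $\alpha$ at time index $i$. Every trellis is assumed trim: each vertex has at least one outgoing and one incoming edge. $T$ is linear if every $V_i(T)$ is an $\mathbb{F}$-vector space and every $E_i(T)$ is a subspace of $V_i(T)\times\mathbb{F}\times V_{i+1}(T)$. A path of length $m$ is a sequence $v_0\alpha_0v_1\alpha_1\cdots\alpha_{m-1}v_m$ such that each $(v_j,\alpha_j,v_{j+1})$ is an edge. A cycle is a path of length $n$ starting in $V_0(T)$ with $v_n=v_0$; it is identified with $(\mathbf{v},\boldsymbol{\alpha})\in\prod_{i\in\mathbb{Z}_n}V_i(T)\times\mathbb{F}^n$. The label code $\mathbb{S}(T)$ is the set of cycles (a linear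 subspace if $T$ is linear); $L(\mathbf{v},\boldsymbol{\alpha}):=\boldsymbol{\alpha}$; $C(T):=L(\mathbb{S}(T))$. $T$ is reduced if every edge lies on some cycle. Spans. For $a\in\mathbb{Z}_n$ and $0\le l\le n-1$ put $[a,a+l]=\{a,a+1,\dots,a+l\}\subseteq\mathbb{Z}_n$ and $(a,a+l]=[a,a+l]\setminus\{a\}$. Such a pair $(a,l)$ is a span of length $l$; there are also two degenerate spans, $\emptyset$ (length $-1$, also written $(a,-1)$) and $\mathbb{Z}_n$ (length $n$, also written $(a,n)$). Partial order: $(a_1,l_1)\le(a_2,l_2)$ iff ($l_1\le l_2<n-1$ and $[a_1,a_1+l_1]\subseteq[a_2,a_2+l_2]$) or ($l_2=n-1$ and $(a_1,a_1+l_1]\subseteq(a_2,a_2+l_2]$) or $l_1=-1$ or $l_2=n$. For a linear trellis $T$, a nondegenerate span $(a,l)$ is a span of the cycle $(\mathbf{v},\boldsymbol{\alpha})$ if $\{i:v_i\neq0\}\subseteq(a,a+l]$ and $\{i:\alpha_i\ne0\}\subseteq[a,a+l]$; $\emptyset$ is a span only of the zero cycle and $\mathbb{Z}_n$ is a span of every cycle. The span subcode $\mathbb{S}_{\mathfrak{s}}(T)$ is the subspace of cycles having span $\mathfrak{s}$, and $\mathbb{S}_{<\mathfrak{s}}(T):=\sum_{\mathfrak{s}'\lneq\mathfrak{s}}\mathbb{S}_{\mathfrak{s}'}(T)$. *)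

theory Defs
  imports Complex_Main
begin

(* Time indices Z_n are represented by naturals i < n; successor is Suc i mod n. *)

definition linear_trellis ::
  "nat \<Rightarrow> ('f::field \<Rightarrow> 'v::ab_group_add \<Rightarrow> 'v) \<Rightarrow> (nat \<Rightarrow> 'v set)
     \<Rightarrow> (nat \<Rightarrow> ('v \<times> 'f \<times> 'v) set) \<Rightarrow> bool" where
  "linear_trellis n scale V E \<longleftrightarrow>
     n \<ge> 1 \<and> vector_space scale \<and>
     (\<forall>i<n. finite (V i) \<and> 0 \<in> V i \<and>
        (\<forall>x\<in>V i. \<forall>y\<in>V i. x + y \<in> V i) \<and> (\<forall>c. \<forall>x\<in>V i. scale c x \<in> V i)) \<and>
     (\<forall>i<n. E i \<subseteq> V i \<times> UNIV \<times> V (Suc i mod n)) \<and>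
     (\<forall>i<n. (0, 0, 0) \<in> E i \<and>
        (\<forall>v a w v' a' w'. (v, a, w) \<in> E i \<longrightarrow> (v', a', w') \<in> E i \<longrightarrow>
             (v + v', a + a', w + w') \<in> E i) \<and>
        (\<forall>c v a w. (v, a, w) \<in> E i \<longrightarrow> (scale c v, c * a, scale c w) \<in> E i)) \<and>
     \<comment> \<open>trim: every vertex has an outgoing and an incoming edge\<close>
     (\<forall>i<n. \<forall>v\<in>V i. \<exists>a w. (v, a, w) \<in> E i) \<and>
     (\<forall>i<n. \<forall>w\<in>V (Suc i mod n). \<exists>v a. (v, a, w) \<in> E i)"

type_synonym ('v, 'f) cycle = "(nat \<Rightarrow> 'v) \<times> (nat \<Rightarrow> 'f)"

(* Cycles, identified with elements of prod_i V_i \<times> F^n (entries outside {0..<n} are 0). *)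
definition cycles :: "nat \<Rightarrow> (nat \<Rightarrow> ('v::zero \<times> 'f::zero \<times> 'v) set) \<Rightarrow> ('v, 'f) cycle set" where
  "cycles n E = {(v, a). (\<forall>i<n. (v i, a i, v (Suc i mod n)) \<in> E i) \<and>
                          (\<forall>i\<ge>n. v i = 0 \<and> a i = 0)}"

definition reduced :: "nat \<Rightarrow> (nat \<Rightarrow> ('v::zero \<times> 'f::zero \<times> 'v) set) \<Rightarrow> bool" where
  "reduced n E \<longleftrightarrow> (\<forall>i<n. \<forall>e\<in>E i. \<exists>(v, a)\<in>cycles n E. e = (v i, a i, v (Suc i mod n)))"

(* Spans: Empty (length -1), Full = Z_n (length n), Sp a l for a \<in> Z_n, 0 \<le> l \<le> n-1. *)
datatype span = Empty | Full | Sp nat nat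

definition valid_span :: "nat \<Rightarrow> span \<Rightarrow> bool" where
  "valid_span n s = (case s of Sp a l \<Rightarrow> a < n \<and> l < n | _ \<Rightarrow> True)"

definition closed_int :: "nat \<Rightarrow> nat \<Rightarrow> nat \<Rightarrow> nat set" where
  "closed_int n a l = {(a + j) mod n | j. j \<le> l}"

definition halfopen_int :: "nat \<Rightarrow> nat \<Rightarrow> nat \<Rightarrow> nat set" where
  "halfopen_int n a l = closed_int n a l - {a}"

fun span_le :: "nat \<Rightarrow> span \<Rightarrow> span \<Rightarrow> bool" where
  "span_le n Empty _ = True"
| "span_le n _ Full = True"
| "span_le n Full _ = False"
| "span_le n (Sp a l) Empty = False"
| "span_le n (Sp a1 l1) (Sp a2 l2) =
     ((l1 \<le> l2 \<and> l2 < n - 1 \<and> closed_int n a1 l1 \<subseteq> closed_int n a2 l2) \<or>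
      (l2 = n - 1 \<and> halfopen_int n a1 l1 \<subseteq> halfopen_int n a2 l2))"

fun is_span_of :: "nat \<Rightarrow> span \<Rightarrow> ('v::zero, 'f::zero) cycle \<Rightarrow> bool" where
  "is_span_of n Empty (v, a) = ((\<forall>i. v i = 0) \<and> (\<forall>i. a i = 0))"
| "is_span_of n Full c = True"
| "is_span_of n (Sp s l) (v, a) =
     ({i. i < n \<and> v i \<noteq> 0} \<subseteq> halfopen_int n s l \<and> {i. i < n \<and> a i \<noteq> 0} \<subseteq> closed_int n s l)"

definition span_subcode :: "nat \<Rightarrow> (nat \<Rightarrow> ('v::zero \<times> 'f::zero \<times> 'v) set) \<Rightarrow> span \<Rightarrow> ('v, 'f) cycle set" where
  "span_subcode n E s = {c \<in> cycles n E. is_span_of n s c}"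

inductive_set subspace_sum :: "('f::field \<Rightarrow> 'v::ab_group_add \<Rightarrow> 'v) \<Rightarrow> ('v, 'f) cycle set set \<Rightarrow> ('v, 'f) cycle set"
  for scale :: "'f::field \<Rightarrow> 'v::ab_group_add \<Rightarrow> 'v" and A :: "('v, 'f) cycle set set" where
  zero: "(\<lambda>_. 0, \<lambda>_. 0) \<in> subspace_sum scale A"
| mem: "X \<in> A \<Longrightarrow> x \<in> X \<Longrightarrow> x \<in> subspace_sum scale A"
| add: "(v, a) \<in> subspace_sum scale A \<Longrightarrow> (w, b) \<in> subspace_sum scale A \<Longrightarrow>
        (\<lambda>i. v i + w i, \<lambda>i. a i + b i) \<in> subspace_sum scale A"
| smul: "(v, a) \<in> subspace_sum scale A \<Longrightarrow>
        (\<lambda>i. scale c (v i), \<lambda>i. c * a i) \<in> subspace_sum scale A"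

definition span_subcode_less ::
  "nat \<Rightarrow> ('f::field \<Rightarrow> 'v::ab_group_add \<Rightarrow> 'v) \<Rightarrow> (nat \<Rightarrow> ('v \<times> 'f \<times> 'v) set) \<Rightarrow> span \<Rightarrow> ('v, 'f) cycle set" where
  "span_subcode_less n scale E s =
     subspace_sum scale {span_subcode n E s' | s'. valid_span n s' \<and> span_le n s' s \<and> s' \<noteq> s}"

end

theory Submission
  imports Defs
begin

lemma linear_trellis_edge_zero: "linear_trellis n scale V E \<Longrightarrow> i < n \<Longrightarrow> (0, 0, 0) \<in> E i"
  unfolding linear_trellis_def by simp

lemma linear_trellis_edge_add:
  "linear_trellis n scale V E \<Longrightarrow> i < n \<Longrightarrow> (v, a, w) \<in> E i \<Longrightarrow> (v', a', w') \<in> E i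
    \<Longrightarrow> (v + v', a + a', w + w') \<in> E i"
  unfolding linear_trellis_def by simp

lemma linear_trellis_edge_smul:
  "linear_trellis n scale V E \<Longrightarrow> i < n \<Longrightarrow> (v, a, w) \<in> E i
    \<Longrightarrow> (scale c v, c * a, scale c w) \<in> E i"
  unfolding linear_trellis_def by simp

lemma linear_trellis_module: "linear_trellis n scale V E \<Longrightarrow> module scale"
  unfolding linear_trellis_def module_iff_vector_space by simp

lemma linear_trellis_edge_diff:
  assumes lt: "linear_trellis n scale V E" and i: "i < n"
    and e: "(v, a, w) \<in> E i" and e': "(v', a', w') \<in> E i"
  shows "(v - v', a - a', w - w') \<in> E i"
proof -
  have md: "module scale" using linear_trellis_module[OF lt] .
  have "(scale (-1) v', (-1) * a', scale (-1) w') \<in> E i"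
    using linear_trellis_edge_smul[OF lt i e'] .
  then have "(- v', - a', - w') \<in> E i"
    using module.scale_minus_left[OF md] module.scale_one[OF md] by simp
  from linear_trellis_edge_add[OF lt i e this] show ?thesis by simp
qed

lemma cycles_edge: "(v, \<alpha>) \<in> cycles n E \<Longrightarrow> i < n \<Longrightarrow> (v i, \<alpha> i, v (Suc i mod n)) \<in> E i"
  unfolding cycles_def by simp

lemma cycles_outside: "(v, \<alpha>) \<in> cycles n E \<Longrightarrow> n \<le> i \<Longrightarrow> v i = 0 \<and> \<alpha> i = 0"
  unfolding cycles_def by simp

lemma cycles_diff:
  assumes lt: "linear_trellis n scale V E"
    and c: "(v, \<alpha>) \<in> cycles n E" and d: "(w, \<beta>) \<in> cycles n E"
  shows "(\<lambda>i. v i - w i, \<lambda>i. \<alpha> i - \<beta> i) \<in> cycles n E"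
proof -
  have "(v i - w i, \<alpha> i - \<beta> i, v (Suc i mod n) - w (Suc i mod n)) \<in> E i" if "i < n" for i
    using linear_trellis_edge_diff[OF lt that cycles_edge[OF c that] cycles_edge[OF d that]] .
  moreover have "v i - w i = 0 \<and> \<alpha> i - \<beta> i = 0" if "n \<le> i" for i
    using cycles_outside[OF c that] cycles_outside[OF d that] by simp
  ultimately show ?thesis unfolding cycles_def by simp
qed

lemma subspace_sum_closed:
  assumes "y \<in> subspace_sum scale A"
    and "P (\<lambda>_. 0, \<lambda>_. 0)"
    and "\<And>X y. X \<in> A \<Longrightarrow> y \<in> X \<Longrightarrow> P y"
    and "\<And>v \<alpha> w \<beta>. P (v, \<alpha>) \<Longrightarrow> P (w, \<beta>) \<Longrightarrow> P (\<lambda>i. v i + w i, \<lambda>i. \<alpha> i + \<beta> i)"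
    and "\<And>v \<alpha> c. P (v, \<alpha>) \<Longrightarrow> P (\<lambda>i. scale c (v i), \<lambda>i. c * \<alpha> i)"
  shows "P y"
  using assms(1) by induction (use assms in blast)+

lemma subspace_sum_mono: "A \<subseteq> B \<Longrightarrow> subspace_sum scale A \<subseteq> subspace_sum scale B"
proof
  fix y assume AB: "A \<subseteq> B" and y: "y \<in> subspace_sum scale A"
  from y show "y \<in> subspace_sum scale B"
    by (induction rule: subspace_sum.induct) (use AB in \<open>auto intro: subspace_sum.intros\<close>)
qed

section \<open>Cyclic windows\<close>

text \<open>The offset of time index \<open>i\<close> in the cyclic window starting at \<open>a\<close>:
  the unique \<open>t < n\<close> with \<open>i = (a + t) mod n\<close>.\<close>

definition offset :: "nat \<Rightarrow> nat \<Rightarrow> nat \<Rightarrow> nat" where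
  "offset n a i = (i + (n - a)) mod n"

lemma offset_window: "a \<le> n \<Longrightarrow> offset n a ((a + j) mod n) = j mod n"
proof -
  assume "a \<le> n"
  then have "a + j + (n - a) = j + n" by simp
  then show ?thesis unfolding offset_def by (simp only: mod_add_left_eq) simp
qed

lemma window_offset: "a \<le> n \<Longrightarrow> (a + offset n a i) mod n = i mod n"
proof -
  assume "a \<le> n"
  then have "a + (i + (n - a)) = i + n" by simp
  then show ?thesis unfolding offset_def by (simp only: mod_add_right_eq) simp
qed

lemma offset_Suc: "offset n a (Suc i mod n) = Suc (offset n a i) mod n"
  unfolding offset_def by (simp only: mod_add_left_eq mod_Suc_eq) simp

lemma offset_less: "a < n \<Longrightarrow> offset n a i < n"
  unfolding offset_def by simp

lemma offset_start: "a \<le> n \<Longrightarrow> offset n a a = 0"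
  unfolding offset_def by simp

lemma offset_pos_iff: "a < n \<Longrightarrow> i < n \<Longrightarrow> 0 < offset n a i \<longleftrightarrow> i \<noteq> a"
  using window_offset[of a n i] offset_start[of a n] by (cases "offset n a i") auto

lemma closed_int_mono: "l1 \<le> l2 \<Longrightarrow> closed_int n a l1 \<subseteq> closed_int n a l2"
  unfolding closed_int_def by fastforce

lemma halfopen_int_mono: "l1 \<le> l2 \<Longrightarrow> halfopen_int n a l1 \<subseteq> halfopen_int n a l2"
  using closed_int_mono unfolding halfopen_int_def by fastforce

lemma closed_int_offset:
  assumes "a < n" "l < n"
  shows "closed_int n a l = {i. i < n \<and> offset n a i \<le> l}"
proof (intro equalityI subsetI)
  fix i assume "i \<in> closed_int n a l"
  then obtain j where "j \<le> l" "i = (a + j) mod n" unfolding closed_int_def by blast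
  then show "i \<in> {i. i < n \<and> offset n a i \<le> l}" using assms offset_window[of a n j] by simp
next
  fix i assume "i \<in> {i. i < n \<and> offset n a i \<le> l}"
  then show "i \<in> closed_int n a l"
    using window_offset[of a n i] assms unfolding closed_int_def by force
qed

lemma halfopen_int_offset:
  assumes "a < n" "l < n"
  shows "halfopen_int n a l = {i. i < n \<and> 0 < offset n a i \<and> offset n a i \<le> l}"
  unfolding halfopen_int_def closed_int_offset[OF assms] by (auto simp: offset_pos_iff[OF assms(1)])

lemma card_halfopen_int:
  assumes "a < n" "l < n"
  shows "card (halfopen_int n a l) = l"
proof -
  have "bij_betw (offset n a) (halfopen_int n a l) {1..l}"
  proof (rule bij_betw_imageI)
    show "inj_on (offset n a) (halfopen_int n a l)"
      by (rule inj_onI) (metis window_offset assms(1) less_imp_le mod_less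
          halfopen_int_offset[OF assms] mem_Collect_eq)
    show "offset n a ` halfopen_int n a l = {1..l}"
    proof (intro equalityI subsetI)
      fix j assume j: "j \<in> {1..l}"
      then have "offset n a ((a + j) mod n) = j" using assms offset_window[of a n j] by simp
      moreover have "(a + j) mod n \<in> halfopen_int n a l"
        using j assms calculation unfolding halfopen_int_offset[OF assms] by auto
      ultimately show "j \<in> offset n a ` halfopen_int n a l" by (metis image_eqI)
    qed (auto simp: halfopen_int_offset[OF assms])
  qed
  then show ?thesis by (simp add: bij_betw_same_card)
qed

lemma closed_int_Suc_start:
  assumes "a < n" "0 < l" "l < n"
  shows "closed_int n (Suc a mod n) (l - 1) = halfopen_int n a l"
proof (intro equalityI subsetI)
  fix i assume "i \<in> closed_int n (Suc a mod n) (l - 1)"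
  then obtain j where j: "j \<le> l - 1" "i = (Suc a mod n + j) mod n" unfolding closed_int_def by blast
  then have "i = (a + Suc j) mod n" by (simp add: mod_add_left_eq)
  then show "i \<in> halfopen_int n a l"
    using j assms offset_window[of a n "Suc j"] unfolding halfopen_int_offset[OF assms(1,3)] by simp
next
  fix i assume "i \<in> halfopen_int n a l"
  then have i: "i < n" "0 < offset n a i" "offset n a i \<le> l"
    unfolding halfopen_int_offset[OF assms(1,3)] by auto
  obtain k where k: "offset n a i = Suc k" using i(2) gr0_implies_Suc by blast
  have "(Suc a mod n + (offset n a i - 1)) mod n = (a + offset n a i) mod n"
    unfolding k by (simp add: mod_add_left_eq)
  then have "i = (Suc a mod n + (offset n a i - 1)) mod n"
    using window_offset[of a n i] assms i(1) by simp
  then show "i \<in> closed_int n (Suc a mod n) (l - 1)"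
    using i unfolding closed_int_def by (intro CollectI exI[of _ "offset n a i - 1"]) auto
qed

lemma halfopen_int_Suc_start:
  assumes "a < n" "0 < l" "l < n"
  shows "halfopen_int n (Suc a mod n) (l - 1) = halfopen_int n a l - {Suc a mod n}"
  using closed_int_Suc_start[OF assms] unfolding halfopen_int_def[of n "Suc a mod n"] by simp

section \<open>The span order on nondegenerate spans\<close>

lemma span_le_SpI:
  assumes "l1 \<le> l2" "l2 < n"
    and "closed_int n a1 l1 \<subseteq> closed_int n a2 l2" "halfopen_int n a1 l1 \<subseteq> halfopen_int n a2 l2"
  shows "span_le n (Sp a1 l1) (Sp a2 l2)"
  using assms by (cases "l2 = n - 1") simp_all

text \<open>For a span of positive length, containment of its half-open window in that of another
  span already implies the span order: the lengths compare by counting, and the start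
  \<open>a\<close> lies in the other closed window because its successor lies in the half-open one.\<close>

lemma span_le_of_halfopen_subset:
  assumes a: "a < n" and b: "b < n" and l: "0 < l" "l < n" and m: "m < n"
    and sub: "halfopen_int n a l \<subseteq> halfopen_int n b m"
  shows "span_le n (Sp a l) (Sp b m)"
proof (rule span_le_SpI[OF _ m _ sub])
  show "l \<le> m"
    using card_mono[OF _ sub] card_halfopen_int[OF a l(2)] card_halfopen_int[OF b m]
    unfolding halfopen_int_def closed_int_def by simp
  have "offset n a (Suc a mod n) = 1"
    using l offset_Suc[of n a a] offset_start[of a n] a by simp
  then have "Suc a mod n \<in> halfopen_int n b m"
    using sub l a unfolding halfopen_int_offset[OF a l(2)] by auto
  then have k: "0 < Suc (offset n b a) mod n" "Suc (offset n b a) mod n \<le> m"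
    unfolding halfopen_int_offset[OF b m] by (auto simp: offset_Suc)
  then have "Suc (offset n b a) < n"
    using offset_less[OF b, of a] by (metis Suc_lessI mod_self order_less_irrefl)
  then have "a \<in> closed_int n b m"
    using k a unfolding closed_int_offset[OF b m] by simp
  then show "closed_int n a l \<subseteq> closed_int n b m"
    using sub unfolding halfopen_int_def by blast
qed

lemma span_le_point:
  assumes "a < n" "m < n" "a \<in> closed_int n b m"
  shows "span_le n (Sp a 0) (Sp b m)"
  using assms by (intro span_le_SpI) (auto simp: halfopen_int_def closed_int_def)

lemma start_label_vanishes:
  assumes vs: "valid_span n s'" and nle: "\<not> span_le n (Sp a 0) s'" and a: "a < n"
    and y: "y \<in> span_subcode n E s'"
  shows "snd y a = 0"
proof -
  obtain v \<alpha> where yv: "y = (v, \<alpha>)" by fastforce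
  show ?thesis
  proof (cases s')
    case Empty
    then show ?thesis using y yv by (simp add: span_subcode_def)
  next
    case Full
    then show ?thesis using nle by simp
  next
    case (Sp b m)
    then have m: "m < n" using vs by (simp add: valid_span_def)
    have "a \<notin> closed_int n b m" using span_le_point[OF a m] nle Sp by blast
    then show ?thesis using y yv Sp a by (auto simp: span_subcode_def)
  qed
qed

lemma window_vertex_vanishes:
  assumes vs: "valid_span n s'" and nle: "\<not> span_le n (Sp a l) s'"
    and a: "a < n" and l: "0 < l" "l < n" and y: "y \<in> span_subcode n E s'"
  shows "\<exists>p. 0 < p \<and> p \<le> l \<and> fst y ((a + p) mod n) = 0"
proof (rule ccontr)
  assume none: "\<not> ?thesis"
  obtain v \<alpha> where yv: "y = (v, \<alpha>)" by fastforce
  have supp: "halfopen_int n a l \<subseteq> {i. i < n \<and> v i \<noteq> 0}"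
  proof
    fix i assume "i \<in> halfopen_int n a l"
    then have i: "i < n" "0 < offset n a i" "offset n a i \<le> l"
      unfolding halfopen_int_offset[OF a l(2)] by auto
    moreover have "(a + offset n a i) mod n = i" using window_offset[of a n i] a i(1) by simp
    ultimately show "i \<in> {i. i < n \<and> v i \<noteq> 0}" using none yv by auto
  qed
  show False
  proof (cases s')
    case Empty
    then show False using none y yv l by (auto simp: span_subcode_def)
  next
    case Full
    then show False using nle by simp
  next
    case (Sp b m)
    then have bm: "b < n" "m < n" using vs by (simp_all add: valid_span_def)
    have "halfopen_int n a l \<subseteq> halfopen_int n b m"
      using supp y yv Sp by (auto simp: span_subcode_def)
    then show False using span_le_of_halfopen_subset[OF a bm(1) l bm(2)] nle Sp by blast
  qed
qed

section \<open>Paths returning to the zero vertex\<close>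

definition window_path ::
  "nat \<Rightarrow> (nat \<Rightarrow> ('v \<times> 'f \<times> 'v) set) \<Rightarrow> nat \<Rightarrow> nat \<Rightarrow> (nat \<Rightarrow> 'v) \<Rightarrow> (nat \<Rightarrow> 'f) \<Rightarrow> bool" where
  "window_path n E a l cs cl \<longleftrightarrow> (\<forall>t<l. (cs t, cl t, cs (Suc t)) \<in> E ((a + t) mod n))"

definition returns_to_zero ::
  "nat \<Rightarrow> (nat \<Rightarrow> ('v::zero \<times> 'f::zero \<times> 'v) set) \<Rightarrow> nat \<Rightarrow> nat \<Rightarrow> ('v, 'f) cycle \<Rightarrow> bool" where
  "returns_to_zero n E a l y \<longleftrightarrow>
     (\<exists>cs cl. window_path n E a l cs cl \<and> cs 0 = fst y a \<and> cs 1 = fst y (Suc a mod n) \<and>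
              cl 0 = snd y a \<and> cs l = 0)"

text \<open>A cycle through a zero vertex inside the window returns to zero: truncate it there.\<close>

lemma returns_to_zero_truncate:
  assumes lt: "linear_trellis n scale V E" and a: "a < n"
    and y: "y \<in> cycles n E" and p: "0 < p" "p \<le> l" "fst y ((a + p) mod n) = 0"
  shows "returns_to_zero n E a l y"
proof -
  obtain v \<alpha> where yv: "y = (v, \<alpha>)" by fastforce
  define cs where "cs t = (if t \<le> p then v ((a + t) mod n) else 0)" for t
  define cl where "cl t = (if t < p then \<alpha> ((a + t) mod n) else 0)" for t
  have "window_path n E a l cs cl"
    unfolding window_path_def
  proof (intro allI impI)
    fix t assume "t < l"
    have i: "(a + t) mod n < n" using a by simp
    show "(cs t, cl t, cs (Suc t)) \<in> E ((a + t) mod n)"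
    proof (cases "t < p")
      case True
      have "Suc ((a + t) mod n) mod n = (a + Suc t) mod n" by (simp add: mod_Suc_eq)
      then show ?thesis using cycles_edge[OF y[unfolded yv] i] True unfolding cs_def cl_def by simp
    next
      case False
      then have "cs t = 0" "cl t = 0" "cs (Suc t) = 0" using p yv unfolding cs_def cl_def by auto
      then show ?thesis using linear_trellis_edge_zero[OF lt i] by simp
    qed
  qed
  moreover have "cs l = 0" using p yv unfolding cs_def by (cases "l = p") auto
  moreover have "cs 0 = fst y a" "cs 1 = fst y (Suc a mod n)" "cl 0 = snd y a"
    using p a yv unfolding cs_def cl_def by auto
  ultimately show ?thesis unfolding returns_to_zero_def by blast
qed

text \<open>Returning to zero is a linear condition, so it passes from the summands to their sum.\<close>

lemma returns_to_zero_subspace_sum: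
  assumes lt: "linear_trellis n scale V E"
    and gen: "\<And>X y. X \<in> A \<Longrightarrow> y \<in> X \<Longrightarrow> returns_to_zero n E a l y"
    and y: "y \<in> subspace_sum scale A"
  shows "returns_to_zero n E a l y"
proof (rule subspace_sum_closed[OF y _ gen])
  have "window_path n E a l (\<lambda>_. 0) (\<lambda>_. 0)"
    unfolding window_path_def using linear_trellis_edge_zero[OF lt] lt
    by (simp add: linear_trellis_def)
  then show "returns_to_zero n E a l (\<lambda>_. 0, \<lambda>_. 0)"
    unfolding returns_to_zero_def by fastforce
next
  fix v \<alpha> w \<beta>
  assume "returns_to_zero n E a l (v, \<alpha>)" "returns_to_zero n E a l (w, \<beta>)"
  then obtain cs cl ds dl where
    c: "window_path n E a l cs cl" "cs 0 = v a" "cs 1 = v (Suc a mod n)" "cl 0 = \<alpha> a" "cs l = 0" and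
    d: "window_path n E a l ds dl" "ds 0 = w a" "ds 1 = w (Suc a mod n)" "dl 0 = \<beta> a" "ds l = 0"
    unfolding returns_to_zero_def by auto
  have "window_path n E a l (\<lambda>t. cs t + ds t) (\<lambda>t. cl t + dl t)"
    using c(1) d(1) linear_trellis_edge_add[OF lt] lt
    unfolding window_path_def linear_trellis_def by simp
  with c d show "returns_to_zero n E a l (\<lambda>i. v i + w i, \<lambda>i. \<alpha> i + \<beta> i)"
    unfolding returns_to_zero_def by fastforce
next
  fix v \<alpha> c
  assume "returns_to_zero n E a l (v, \<alpha>)"
  then obtain cs cl where
    cs: "window_path n E a l cs cl" "cs 0 = v a" "cs 1 = v (Suc a mod n)" "cl 0 = \<alpha> a" "cs l = 0"
    unfolding returns_to_zero_def by auto
  have "window_path n E a l (\<lambda>t. scale c (cs t)) (\<lambda>t. c * cl t)"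
    using cs(1) linear_trellis_edge_smul[OF lt] lt
    unfolding window_path_def linear_trellis_def by simp
  moreover have "scale c 0 = 0" using module.scale_zero_right[OF linear_trellis_module[OF lt]] .
  ultimately show "returns_to_zero n E a l (\<lambda>i. scale c (v i), \<lambda>i. c * \<alpha> i)"
    using cs unfolding returns_to_zero_def by fastforce
qed

section \<open>Splicing a path into a cycle\<close>

definition splice_path :: "nat \<Rightarrow> nat \<Rightarrow> nat \<Rightarrow> (nat \<Rightarrow> 'v::zero) \<Rightarrow> (nat \<Rightarrow> 'f::zero) \<Rightarrow> ('v, 'f) cycle" where
  "splice_path n a l cs cl =
     (\<lambda>i. if i < n \<and> offset n a i \<le> l then cs (offset n a i) else 0,
      \<lambda>i. if i < n \<and> offset n a i < l then cl (offset n a i) else 0)"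

lemma splice_path_vertex_zero:
  assumes "cs 0 = 0" "cs l = 0" "offset n a i = 0 \<or> l \<le> offset n a i"
  shows "fst (splice_path n a l cs cl) i = 0"
  using assms unfolding splice_path_def by auto

lemma splice_path_cycle:
  assumes lt: "linear_trellis n scale V E" and a: "a < n" and l: "l < n"
    and path: "window_path n E a l cs cl" and z: "cs 0 = 0" "cs l = 0"
  shows "splice_path n a l cs cl \<in> cycles n E"
proof -
  obtain cv ca where c: "splice_path n a l cs cl = (cv, ca)" by fastforce
  have "(cv i, ca i, cv (Suc i mod n)) \<in> E i" if i: "i < n" for i
  proof -
    define t where "t = offset n a i"
    have it: "(a + t) mod n = i" using window_offset[of a n i] a i unfolding t_def by simp
    have next_offset: "offset n a (Suc i mod n) = Suc t mod n" unfolding t_def by (rule offset_Suc)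
    have t: "t < n" unfolding t_def using offset_less[OF a] .
    show ?thesis
    proof (cases "t < l")
      case True
      then have "cv i = cs t" "ca i = cl t" "cv (Suc i mod n) = cs (Suc t)"
        using c i l next_offset a unfolding splice_path_def t_def by auto
      then show ?thesis using path True it unfolding window_path_def by auto
    next
      case False
      have cv_zero: "cv j = 0" if "offset n a j = 0 \<or> l \<le> offset n a j" for j
        using splice_path_vertex_zero[OF z that, where cl = cl] c by simp
      have "offset n a (Suc i mod n) = 0 \<or> l \<le> offset n a (Suc i mod n)"
        using False next_offset t by (cases "Suc t = n") auto
      moreover have "ca i = 0" using False c unfolding splice_path_def t_def by auto
      ultimately have "cv i = 0" "ca i = 0" "cv (Suc i mod n) = 0"
        using cv_zero False unfolding t_def by auto
      then show ?thesis using linear_trellis_edge_zero[OF lt i] by simp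
    qed
  qed
  then show ?thesis using c unfolding cycles_def splice_path_def by auto
qed

lemma splice_path_span:
  assumes a: "a < n" and l: "0 < l" "l < n" and z: "cs 0 = 0" "cs l = 0"
  shows "is_span_of n (Sp a (l - 1)) (splice_path n a l cs cl)"
proof -
  have l': "l - 1 < n" using l by simp
  obtain cv ca where c: "splice_path n a l cs cl = (cv, ca)" by fastforce
  have "{i. i < n \<and> cv i \<noteq> 0} \<subseteq> halfopen_int n a (l - 1)"
  proof
    fix i assume i: "i \<in> {i. i < n \<and> cv i \<noteq> 0}"
    then have "\<not> (offset n a i = 0 \<or> l \<le> offset n a i)"
      using splice_path_vertex_zero[OF z, where cl = cl] c by fastforce
    then show "i \<in> halfopen_int n a (l - 1)" using i unfolding halfopen_int_offset[OF a l'] by auto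
  qed
  moreover have "{i. i < n \<and> ca i \<noteq> 0} \<subseteq> closed_int n a (l - 1)"
    using c unfolding closed_int_offset[OF a l'] splice_path_def by (auto split: if_splits)
  ultimately show ?thesis using c by simp
qed

lemma splice_path_remainder_span:
  fixes v :: "nat \<Rightarrow> 'v::ab_group_add" and \<alpha> :: "nat \<Rightarrow> 'f::ab_group_add"
  assumes a: "a < n" and l: "0 < l" "l < n" and x: "is_span_of n (Sp a l) (v, \<alpha>)"
    and c: "cs 0 = v a" "cs 1 = v (Suc a mod n)" "cl 0 = \<alpha> a" "cs l = 0"
  shows "is_span_of n (Sp (Suc a mod n) (l - 1))
           (\<lambda>i. v i - fst (splice_path n a l cs cl) i, \<lambda>i. \<alpha> i - snd (splice_path n a l cs cl) i)"
proof -
  have start: "i = a" if "i < n" "offset n a i = 0" for i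
    using offset_pos_iff[OF a that(1)] that(2) by simp
  have second: "i = Suc a mod n" if "i < n" "offset n a i = 1" for i
    using window_offset[of a n i] a that by simp
  have second_offset: "offset n a (Suc a mod n) = 1"
    using offset_Suc[of n a a] offset_start[of a n] a l by simp
  have outside: "l < offset n a i \<Longrightarrow> v i = 0 \<and> \<alpha> i = 0" if "i < n" for i
    using x that by (auto simp: halfopen_int_offset[OF a l(2)] closed_int_offset[OF a l(2)])
  have "i \<in> halfopen_int n a l - {Suc a mod n}"
    if i: "i < n" "v i - fst (splice_path n a l cs cl) i \<noteq> 0" for i
  proof -
    have "offset n a i \<noteq> 0"
    proof
      assume t: "offset n a i = 0"
      then have "i = a" using start i(1) by blast
      then show False using i c(1) t by (simp add: splice_path_def)
    qed
    moreover have "offset n a i \<noteq> 1"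
    proof
      assume t: "offset n a i = 1"
      then have "i = Suc a mod n" using second i(1) by blast
      then show False using i c(2) t l by (simp add: splice_path_def)
    qed
    moreover have "offset n a i \<le> l"
      using outside[OF i(1)] i by (cases "offset n a i \<le> l") (auto simp: splice_path_def)
    ultimately show ?thesis using i second_offset unfolding halfopen_int_offset[OF a l(2)] by auto
  qed
  moreover have "i \<in> halfopen_int n a l"
    if i: "i < n" "\<alpha> i - snd (splice_path n a l cs cl) i \<noteq> 0" for i
  proof -
    have "offset n a i \<noteq> 0"
    proof
      assume t: "offset n a i = 0"
      then have "i = a" using start i(1) by blast
      then show False using i c(3) t l by (simp add: splice_path_def)
    qed
    moreover have "offset n a i \<le> l"
      using outside[OF i(1)] i by (cases "offset n a i \<le> l") (auto simp: splice_path_def)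
    ultimately show ?thesis using i unfolding halfopen_int_offset[OF a l(2)] by auto
  qed
  ultimately show ?thesis
    using closed_int_Suc_start[OF a l] halfopen_int_Suc_start[OF a l] by auto
qed

section \<open>Decomposing a cycle whose first edge returns to zero\<close>

lemma shortened_spans_below:
  assumes a: "a < n" and l: "0 < l" "l < n"
  shows "span_le n (Sp a (l - 1)) (Sp a l)" "span_le n (Sp (Suc a mod n) (l - 1)) (Sp a l)"
proof -
  show "span_le n (Sp a (l - 1)) (Sp a l)"
    using l by (intro span_le_SpI closed_int_mono halfopen_int_mono) simp_all
  show "span_le n (Sp (Suc a mod n) (l - 1)) (Sp a l)"
    using l closed_int_Suc_start[OF a l] halfopen_int_Suc_start[OF a l]
    by (intro span_le_SpI) (auto simp: halfopen_int_def)
qed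

text \<open>A cycle of span \<open>[a, a + l]\<close>, \<open>l \<ge> 1\<close>, whose first edge returns to zero within the
  window is the sum of a cycle of span \<open>[a, a + l - 1]\<close> (the spliced returning path) and a
  cycle of span \<open>[a + 1, a + l]\<close> (the remainder).\<close>

lemma returning_cycle_below:
  assumes lt: "linear_trellis n scale V E" and a: "a < n" and l: "0 < l" "l < n"
    and x: "x \<in> span_subcode n E (Sp a l)" and ret: "returns_to_zero n E a l x"
  shows "x \<in> span_subcode_less n scale E (Sp a l)"
proof -
  obtain v \<alpha> where xv: "x = (v, \<alpha>)" by fastforce
  have x_cyc: "(v, \<alpha>) \<in> cycles n E" and x_span: "is_span_of n (Sp a l) (v, \<alpha>)"
    using x xv by (simp_all add: span_subcode_def)
  obtain cs cl where path: "window_path n E a l cs cl"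
    and c: "cs 0 = v a" "cs 1 = v (Suc a mod n)" "cl 0 = \<alpha> a" "cs l = 0"
    using ret xv unfolding returns_to_zero_def by auto
  have "v a = 0" using x_span a by (auto simp: halfopen_int_def)
  then have c_cyc: "splice_path n a l cs cl \<in> cycles n E"
    using splice_path_cycle[OF lt a l(2) path] c by simp
  obtain cv ca where cv: "splice_path n a l cs cl = (cv, ca)" by fastforce
  let ?d = "(\<lambda>i. v i - cv i, \<lambda>i. \<alpha> i - ca i)"
  let ?F = "{span_subcode n E s' | s'. valid_span n s' \<and> span_le n s' (Sp a l) \<and> s' \<noteq> Sp a l}"
  have "span_subcode n E (Sp a (l - 1)) \<in> ?F"
    using shortened_spans_below(1)[OF a l] a l by (auto simp: valid_span_def)
  moreover have "(cv, ca) \<in> span_subcode n E (Sp a (l - 1))"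
    using c_cyc splice_path_span[OF a l, of cs cl] c \<open>v a = 0\<close> cv by (simp add: span_subcode_def)
  ultimately have c_less: "(cv, ca) \<in> subspace_sum scale ?F" by (rule subspace_sum.mem)
  have "span_subcode n E (Sp (Suc a mod n) (l - 1)) \<in> ?F"
    using shortened_spans_below(2)[OF a l] a l by (auto simp: valid_span_def)
  moreover have "?d \<in> span_subcode n E (Sp (Suc a mod n) (l - 1))"
    using cycles_diff[OF lt x_cyc c_cyc[unfolded cv]]
      splice_path_remainder_span[where cs = cs and cl = cl, OF a l x_span c] cv by (simp add: span_subcode_def)
  ultimately have d_less: "?d \<in> subspace_sum scale ?F" by (rule subspace_sum.mem)
  have "x = (\<lambda>i. cv i + (v i - cv i), \<lambda>i. ca i + (\<alpha> i - ca i))" using xv by simp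
  then show ?thesis
    using subspace_sum.add[OF c_less d_less] unfolding span_subcode_less_def by simp
qed

lemma point_cycle_zero:
  assumes a: "a < n" and x: "x \<in> span_subcode n E (Sp a 0)" and lab: "snd x a = 0"
  shows "x = (\<lambda>_. 0, \<lambda>_. 0)"
proof -
  obtain v \<alpha> where xv: "x = (v, \<alpha>)" by fastforce
  have "v i = 0 \<and> \<alpha> i = 0" for i
  proof (cases "i < n")
    case True
    then show ?thesis
      using x xv lab a by (auto simp: span_subcode_def halfopen_int_def closed_int_def)
  next
    case False
    then show ?thesis using x xv cycles_outside[of v \<alpha> n E i] by (simp add: span_subcode_def)
  qed
  then show ?thesis using xv by auto
qed

lemma sum_below_Full:
  assumes "\<forall>i\<in>I. valid_span n (ss i)" and "\<forall>i\<in>I. \<not> span_le n Full (ss i)"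
  shows "subspace_sum scale ((\<lambda>i. span_subcode n E (ss i)) ` I) \<subseteq> span_subcode_less n scale E Full"
proof -
  have "span_le n (ss i) Full" "ss i \<noteq> Full" if "i \<in> I" for i
    using assms(2) that by (cases "ss i"; auto)+
  then have "(\<lambda>i. span_subcode n E (ss i)) ` I
      \<subseteq> {span_subcode n E s' | s'. valid_span n s' \<and> span_le n s' Full \<and> s' \<noteq> Full}"
    using assms(1) by blast
  then show ?thesis unfolding span_subcode_less_def by (rule subspace_sum_mono)
qed

lemma start_label_vanishes_on_sum:
  assumes "\<forall>i\<in>I. valid_span n (ss i)" and "\<forall>i\<in>I. \<not> span_le n (Sp a 0) (ss i)" and a: "a < n"
    and sum: "x \<in> subspace_sum scale ((\<lambda>i. span_subcode n E (ss i)) ` I)"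
  shows "snd x a = 0"
  using sum
proof (rule subspace_sum_closed)
  fix X y assume "X \<in> (\<lambda>i. span_subcode n E (ss i)) ` I" "y \<in> X"
  then obtain i where "i \<in> I" "y \<in> span_subcode n E (ss i)" by blast
  then show "snd y a = 0" using start_label_vanishes[OF _ _ a] assms(1,2) by blast
qed auto

lemma returns_to_zero_on_sum:
  assumes lt: "linear_trellis n scale V E"
    and "\<forall>i\<in>I. valid_span n (ss i)" and "\<forall>i\<in>I. \<not> span_le n (Sp a l) (ss i)"
    and a: "a < n" and l: "0 < l" "l < n"
    and sum: "x \<in> subspace_sum scale ((\<lambda>i. span_subcode n E (ss i)) ` I)"
  shows "returns_to_zero n E a l x"
  using lt _ sum
proof (rule returns_to_zero_subspace_sum)
  fix X y assume "X \<in> (\<lambda>i. span_subcode n E (ss i)) ` I" "y \<in> X"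
  then obtain i where i: "i \<in> I" "y \<in> span_subcode n E (ss i)" by blast
  then obtain p where "0 < p" "p \<le> l" "fst y ((a + p) mod n) = 0"
    using window_vertex_vanishes[OF _ _ a l] assms(2,3) by blast
  then show "returns_to_zero n E a l y"
    using returns_to_zero_truncate[OF lt a] i by (auto simp: span_subcode_def)
qed

theorem mainTheorem1:
  fixes scale :: "'f::{field,finite} \<Rightarrow> 'v::ab_group_add \<Rightarrow> 'v"
    and n :: nat and V :: "nat \<Rightarrow> 'v set" and E :: "nat \<Rightarrow> ('v \<times> 'f \<times> 'v) set"
    and I :: "'i set" and ss :: "'i \<Rightarrow> span" and s :: span
  assumes "linear_trellis n scale V E"
    and "reduced n E"
    and "\<forall>i\<in>I. valid_span n (ss i)"
    and "valid_span n s"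
    and "\<forall>i\<in>I. \<not> span_le n s (ss i)"
  shows "span_subcode n E s \<inter> subspace_sum scale ((\<lambda>i. span_subcode n E (ss i)) ` I)
           \<subseteq> span_subcode_less n scale E s"
proof
  fix x assume "x \<in> span_subcode n E s \<inter> subspace_sum scale ((\<lambda>i. span_subcode n E (ss i)) ` I)"
  then have x: "x \<in> span_subcode n E s"
    and sum: "x \<in> subspace_sum scale ((\<lambda>i. span_subcode n E (ss i)) ` I)" by auto
  have zero: "(\<lambda>_. 0, \<lambda>_. 0) \<in> span_subcode_less n scale E s"
    unfolding span_subcode_less_def by (rule subspace_sum.zero)
  show "x \<in> span_subcode_less n scale E s"
  proof (cases s)
    case Empty
    then have "x = (\<lambda>_. 0, \<lambda>_. 0)" using x by (cases x) (auto simp: span_subcode_def)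
    then show ?thesis using zero by simp
  next
    case Full
    then show ?thesis using sum_below_Full assms(3,5) sum by blast
  next
    case (Sp a l)
    have a: "a < n" and l: "l < n" using assms(4) Sp by (simp_all add: valid_span_def)
    show ?thesis
    proof (cases "l = 0")
      case True
      then have "snd x a = 0" using start_label_vanishes_on_sum[OF assms(3) _ a sum] assms(5) Sp by simp
      then have "x = (\<lambda>_. 0, \<lambda>_. 0)" using point_cycle_zero[OF a] x Sp True by simp
      then show ?thesis using zero by simp
    next
      case False
      then have "returns_to_zero n E a l x"
        using returns_to_zero_on_sum[OF assms(1,3) _ a _ l sum] assms(5) Sp by simp
      then show ?thesis using returning_cycle_below[OF assms(1) a _ l] x Sp False by simp
    qed
  qed
qed

end
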